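(* Suppose $P_{II*}\subseteq P_{II}$ is a chain (totally ordered by inclusion). Then for filters $\Xi,\Upsilon\in P_{III*}$, $\mathcal C_{\Xi\text{-unc}}=\mathcal C_{\Upsilon\text{-unc}}$ if and only if $\Xi=\Upsilon$.
   Context: Let $n\ge1$, $L=\{1,\dots,n\}$, and for $i\in L$ let $\mathcal H_i$ be a Hilbert space with $1<\dim\mathcal H_i<\infty$; $\mathcal H_X=\bigotimes_{i\in X}\mathcal H_i$ and $\mathcal D_X$ is the set of density operators on $\mathcal H_X$. $P_I$ is the set of partitions of $L$ ordered by refinement. For $\xi\in P_I$, $\mathcal D_{\xi\text{-unc}}=\{\varrho\in\mathcal D_L:\varrho=\bigotimes_{X\in\xi}\varrho_X,\ \varrho_X\in\mathcal D_X\}$, and for $S\subseteq P_I$, $\mathcal D_{S\text{-unc}}=\bigcup_{\xi\in S}\mathcal D_{\xi\text{-unc}}$. $P_{II}$ is the set of nonempty down-sets of $P_I$, ordered by inclusion; $P_{II*}$ is a nonempty subset of $P_{II}$ and $P_{III*}$ is the set of nonempty up-sets of $P_{II*}$. For $\Xi\in P_{III*}$: $\overline\Xi=P_{II*}\setminus\Xi$ and $\mathcal C_{\Xi\text{-unc}}=\bigcap_{\boldsymbol\xi'\in\overline\Xi}(\mathcal D_L\setminus\mathcal D_{\boldsymbol\xi'\text{-unc}})\cap\bigcap_{\boldsymbol\xi\in\Xi}\mathcal D_{\boldsymbol\xi\text{-unc}}$. *)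

theory Defs
  imports Complex_Main "HOL-Library.Disjoint_Sets"
begin

text \<open>Local dimensions: site i carries a Hilbert space of dimension d i, identified
with C^(d i) via its computational basis. The Hilbert space H_X of a subsystem X has the
product basis indexed by functions f with f i < d i for i in X and f i = 0 outside X.
Operators on H_X are represented by their matrix entries w.r.t. this basis
(entries outside the basis are required to be zero).\<close>

type_synonym op = "(nat \<Rightarrow> nat) \<Rightarrow> (nat \<Rightarrow> nat) \<Rightarrow> complex"

definition basis_idx :: "(nat \<Rightarrow> nat) \<Rightarrow> nat set \<Rightarrow> (nat \<Rightarrow> nat) set" where
  "basis_idx d X = {f. (\<forall>i\<in>X. f i < d i) \<and> (\<forall>i. i \<notin> X \<longrightarrow> f i = 0)}"

definition restr :: "(nat \<Rightarrow> nat) \<Rightarrow> nat set \<Rightarrow> (nat \<Rightarrow> nat)" where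
  "restr f X = (\<lambda>i. if i \<in> X then f i else 0)"

definition density_ops :: "(nat \<Rightarrow> nat) \<Rightarrow> nat set \<Rightarrow> op set" where
  "density_ops d X = {\<rho>.
     (\<forall>f g. f \<notin> basis_idx d X \<or> g \<notin> basis_idx d X \<longrightarrow> \<rho> f g = 0) \<and>
     (\<forall>f\<in>basis_idx d X. \<forall>g\<in>basis_idx d X. \<rho> g f = cnj (\<rho> f g)) \<and>
     (\<forall>v :: (nat \<Rightarrow> nat) \<Rightarrow> complex.
        Im (\<Sum>f\<in>basis_idx d X. \<Sum>g\<in>basis_idx d X. cnj (v f) * \<rho> f g * v g) = 0 \<and>
        Re (\<Sum>f\<in>basis_idx d X. \<Sum>g\<in>basis_idx d X. cnj (v f) * \<rho> f g * v g) \<ge> 0) \<and>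
     (\<Sum>f\<in>basis_idx d X. \<rho> f f) = 1}"

definition tensor_over :: "(nat \<Rightarrow> nat) \<Rightarrow> nat set \<Rightarrow> nat set set \<Rightarrow> (nat set \<Rightarrow> op) \<Rightarrow> op" where
  "tensor_over d L \<xi> \<rho>s = (\<lambda>f g.
     if f \<in> basis_idx d L \<and> g \<in> basis_idx d L
     then (\<Prod>X\<in>\<xi>. \<rho>s X (restr f X) (restr g X)) else 0)"

definition PI :: "nat set \<Rightarrow> nat set set set" where
  "PI L = {\<xi>. partition_on L \<xi>}"

definition refines :: "nat set set \<Rightarrow> nat set set \<Rightarrow> bool" where
  "refines \<upsilon> \<xi> \<longleftrightarrow> (\<forall>X\<in>\<upsilon>. \<exists>Y\<in>\<xi>. X \<subseteq> Y)"

definition PII :: "nat set \<Rightarrow> nat set set set set" where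
  "PII L = {S. S \<subseteq> PI L \<and> S \<noteq> {} \<and>
              (\<forall>\<xi>\<in>S. \<forall>\<upsilon>\<in>PI L. refines \<upsilon> \<xi> \<longrightarrow> \<upsilon> \<in> S)}"

definition PIII :: "nat set set set set \<Rightarrow> nat set set set set set" where
  "PIII P2 = {\<Xi>. \<Xi> \<subseteq> P2 \<and> \<Xi> \<noteq> {} \<and> (\<forall>a\<in>\<Xi>. \<forall>b\<in>P2. a \<subseteq> b \<longrightarrow> b \<in> \<Xi>)}"

definition D_unc :: "(nat \<Rightarrow> nat) \<Rightarrow> nat set \<Rightarrow> nat set set \<Rightarrow> op set" where
  "D_unc d L \<xi> = {\<rho>. \<rho> \<in> density_ops d L \<and>
      (\<exists>\<rho>s. (\<forall>X\<in>\<xi>. \<rho>s X \<in> density_ops d X) \<and> \<rho> = tensor_over d L \<xi> \<rho>s)}"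

definition DS_unc :: "(nat \<Rightarrow> nat) \<Rightarrow> nat set \<Rightarrow> nat set set set \<Rightarrow> op set" where
  "DS_unc d L S = (\<Union>\<xi>\<in>S. D_unc d L \<xi>)"

definition C_unc :: "(nat \<Rightarrow> nat) \<Rightarrow> nat set \<Rightarrow> nat set set set set \<Rightarrow> nat set set set set \<Rightarrow> op set" where
  "C_unc d L P2 \<Xi> = (\<Inter>\<xi>'\<in>P2 - \<Xi>. density_ops d L - DS_unc d L \<xi>') \<inter> (\<Inter>\<xi>\<in>\<Xi>. DS_unc d L \<xi>)"

end

theory Submission
  imports Defs "HOL-Library.Indicator_Function"
begin

text \<open>
  For a partition pi let rho_pi be the tensor
  product, over the blocks X of pi, of the classically correlated states
  (|0...0><0...0| + |1...1><1...1|)/2 on X. Its diagonal is supported exactly on the basis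
  vectors that are 1 on a union of blocks of pi and 0 elsewhere, whereas the diagonal support of
  a sigma-product state is a product set; hence rho_pi is sigma-uncorrelated only if pi refines
  sigma. Since P_II* is a finite chain, the least member of an up-set Xi strictly contains every
  member outside Xi, so for a partition pi in the difference rho_pi lies in C_Xi. Thus every
  C_Xi is nonempty, while C_Xi and C_Upsilon are disjoint by definition when Xi and Upsilon differ.
\<close>

definition diag_op :: "((nat \<Rightarrow> nat) \<Rightarrow> real) \<Rightarrow> op" where
  "diag_op w = (\<lambda>f g. if f = g then complex_of_real (w f) else 0)"

lemma finite_basis_idx:
  assumes "finite X" shows "finite (basis_idx d X)"
proof (rule finite_subset)
  show "basis_idx d X \<subseteq> (\<lambda>g i. if i \<in> X then g i else 0) ` PiE X (\<lambda>i. {..<d i})"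
  proof
    fix f assume f: "f \<in> basis_idx d X"
    then have "f = (\<lambda>i. if i \<in> X then restrict f X i else 0)" "restrict f X \<in> PiE X (\<lambda>i. {..<d i})"
      by (auto simp: basis_idx_def)
    then show "f \<in> (\<lambda>g i. if i \<in> X then g i else 0) ` PiE X (\<lambda>i. {..<d i})" by blast
  qed
qed (use assms in \<open>simp add: finite_PiE\<close>)

lemma quadratic_form_diag_op:
  assumes "finite B"
  shows "(\<Sum>f\<in>B. \<Sum>g\<in>B. cnj (v f) * diag_op w f g * v g) = of_real (\<Sum>f\<in>B. w f * (cmod (v f))\<^sup>2)"
proof -
  have "(\<Sum>g\<in>B. cnj (v f) * diag_op w f g * v g) = of_real (w f * (cmod (v f))\<^sup>2)"
    if "f \<in> B" for f
  proof -
    have "(\<Sum>g\<in>B. cnj (v f) * diag_op w f g * v g) = cnj (v f) * diag_op w f f * v f"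
      using assms that by (subst sum.remove[of _ f]) (auto simp: diag_op_def intro!: sum.neutral split: if_splits)
    then show ?thesis
      by (simp add: diag_op_def mult_ac flip: complex_norm_square)
  qed
  then show ?thesis
    by simp
qed

lemma diag_op_density_ops:
  assumes "finite X" and "\<And>f. w f \<noteq> 0 \<Longrightarrow> f \<in> basis_idx d X" and "\<And>f. 0 \<le> w f"
    and "(\<Sum>f\<in>basis_idx d X. w f) = 1"
  shows "diag_op w \<in> density_ops d X"
  unfolding density_ops_def
proof (intro CollectI conjI allI ballI impI)
  show "diag_op w f g = 0" if "f \<notin> basis_idx d X \<or> g \<notin> basis_idx d X" for f g
    using that assms(2) by (auto simp: diag_op_def)
  show "diag_op w g f = cnj (diag_op w f g)" for f g
    by (simp add: diag_op_def)
  show "Im (\<Sum>f\<in>basis_idx d X. \<Sum>g\<in>basis_idx d X. cnj (v f) * diag_op w f g * v g) = 0"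
    and "0 \<le> Re (\<Sum>f\<in>basis_idx d X. \<Sum>g\<in>basis_idx d X. cnj (v f) * diag_op w f g * v g)" for v
    using finite_basis_idx[OF assms(1)] assms(3)
    by (simp_all add: quadratic_form_diag_op sum_nonneg)
  show "(\<Sum>f\<in>basis_idx d X. diag_op w f f) = 1"
    using assms(4) by (simp add: diag_op_def flip: of_real_sum)
qed

text \<open>ones A is the computational basis index equal to 1 on A and 0 elsewhere; it is a valid
  index because every local dimension is at least 2.\<close>

abbreviation ones :: "nat set \<Rightarrow> nat \<Rightarrow> nat" where
  "ones A \<equiv> indicator A"

lemma restr_ones: "restr (ones A) X = ones (A \<inter> X)"
  by (auto simp: restr_def indicator_def)

lemma ones_eq_iff: "ones A = ones B \<longleftrightarrow> A = B"
  by (metis indicator_eq_1_iff subsetI subset_antisym)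

lemma ones_in_basis_idx: "A \<subseteq> X \<Longrightarrow> \<forall>i\<in>X. 1 < d i \<Longrightarrow> ones A \<in> basis_idx d X"
  by (auto simp: basis_idx_def indicator_def)

lemma Union_Int_block:
  assumes "partition_on L \<pi>" "c \<subseteq> \<pi>" "X \<in> \<pi>"
  shows "\<Union>c \<inter> X = (if X \<in> c then X else {})"
proof -
  have "A \<inter> X = {}" if "A \<in> c" "A \<noteq> X" for A
    using disjointD[OF partition_onD2[OF assms(1)]] assms that by blast
  then show ?thesis
    by auto
qed

lemma inj_on_Union_partition:
  assumes "partition_on L \<pi>"
  shows "inj_on Union (Pow \<pi>)"
proof -
  have "a \<subseteq> b" if "a \<subseteq> \<pi>" "b \<subseteq> \<pi>" "\<Union>a = \<Union>b" for a b
  proof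
    fix X assume "X \<in> a"
    with that have "X \<in> \<pi>" and "\<Union>b \<inter> X = X"
      by auto
    moreover have "X \<noteq> {}"
      using partition_onD3[OF assms] \<open>X \<in> \<pi>\<close> by blast
    ultimately show "X \<in> b"
      using Union_Int_block[OF assms \<open>b \<subseteq> \<pi>\<close>] by (metis (full_types))
  qed
  then show ?thesis
    by (intro inj_onI) (simp add: subset_antisym)
qed

lemma card_ones_Union_Pow:
  assumes "finite L" "partition_on L \<pi>"
  shows "card (ones ` Union ` Pow \<pi>) = 2 ^ card \<pi>"
proof -
  have "inj_on (ones \<circ> Union) (Pow \<pi>)"
    using inj_on_Union_partition[OF assms(2)] by (auto simp: inj_on_def ones_eq_iff)
  then have "card ((ones \<circ> Union) ` Pow \<pi>) = card (Pow \<pi>)"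
    by (rule card_image)
  then show ?thesis
    using finite_elements[OF assms] by (simp only: image_comp card_Pow)
qed

lemma restr_eq_on_partition_iff:
  assumes "partition_on L \<pi>" "f \<in> basis_idx d L" "g \<in> basis_idx d L"
  shows "(\<forall>X\<in>\<pi>. restr f X = restr g X) \<longleftrightarrow> f = g"
proof
  assume restr_eq: "\<forall>X\<in>\<pi>. restr f X = restr g X"
  have "f i = g i" for i
  proof (cases "i \<in> L")
    case True
    then obtain X where "X \<in> \<pi>" "i \<in> X"
      using partition_onD1[OF assms(1)] by blast
    then show ?thesis
      using restr_eq by (metis restr_def)
  next
    case False
    then show ?thesis
      using assms(2,3) by (simp add: basis_idx_def)
  qed
  then show "f = g" ..
qed simp

lemma restr_trivial_iff_ones_Union:
  assumes "partition_on L \<pi>" "\<forall>i\<in>L. 1 < d i" "f \<in> basis_idx d L"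
  shows "(\<forall>X\<in>\<pi>. restr f X \<in> {ones {}, ones X}) \<longleftrightarrow> f \<in> ones ` Union ` Pow \<pi>"
proof
  assume trivial: "\<forall>X\<in>\<pi>. restr f X \<in> {ones {}, ones X}"
  define c where "c = {X\<in>\<pi>. restr f X = ones X}"
  have "c \<subseteq> \<pi>"
    by (simp add: c_def)
  have "restr f X = restr (ones (\<Union>c)) X" if "X \<in> \<pi>" for X
    using trivial that Union_Int_block[OF assms(1) \<open>c \<subseteq> \<pi>\<close> that]
    by (auto simp: c_def restr_ones)
  moreover have "ones (\<Union>c) \<in> basis_idx d L"
    using \<open>c \<subseteq> \<pi>\<close> partition_onD1[OF assms(1)] assms(2) by (intro ones_in_basis_idx) auto
  ultimately have "f = ones (\<Union>c)"
    using restr_eq_on_partition_iff[OF assms(1,3)] by blast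
  then show "f \<in> ones ` Union ` Pow \<pi>"
    using \<open>c \<subseteq> \<pi>\<close> by blast
qed (auto simp: restr_ones Union_Int_block[OF assms(1)])

lemma ones_Union_Pow_subset_basis_idx:
  assumes "partition_on L \<pi>" "\<forall>i\<in>L. 1 < d i"
  shows "ones ` Union ` Pow \<pi> \<subseteq> basis_idx d L"
  using partition_onD1[OF assms(1)] assms(2) by (auto intro!: ones_in_basis_idx)

lemma sum_uniform_weight:
  assumes "finite B" "T \<subseteq> B"
  shows "(\<Sum>f\<in>B. if f \<in> T then c else 0) = of_nat (card T) * c"
  using assms by (simp add: sum.inter_restrict[symmetric] Int_absorb1)

lemma prod_if_const:
  fixes c :: "'a :: comm_semiring_1"
  assumes "finite A"
  shows "(\<Prod>x\<in>A. if P x then c else 0) = (if \<forall>x\<in>A. P x then c ^ card A else 0)"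
  using assms by (auto intro!: prod_zero)

definition zero_one_mixture :: "nat set \<Rightarrow> op" where
  "zero_one_mixture X = diag_op (\<lambda>g. if g \<in> {ones {}, ones X} then 1/2 else 0)"

lemma zero_one_mixture_apply:
  "zero_one_mixture X g h = (if g = h \<and> g \<in> {ones {}, ones X} then 1/2 else 0)"
  by (simp add: zero_one_mixture_def diag_op_def)

lemma zero_one_mixture_density_ops:
  assumes "finite X" "X \<noteq> {}" "\<forall>i\<in>X. 1 < d i"
  shows "zero_one_mixture X \<in> density_ops d X"
  unfolding zero_one_mixture_def
proof (rule diag_op_density_ops[OF assms(1)])
  have T: "{ones {}, ones X} \<subseteq> basis_idx d X"
    using assms(3) by (auto intro: ones_in_basis_idx)
  then show "g \<in> basis_idx d X" if "(if g \<in> {ones {}, ones X} then 1/2 else 0 :: real) \<noteq> 0" for g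
    using that by (auto split: if_splits)
  have "card {ones {}, ones X} = 2"
    using assms(2) by (simp add: ones_eq_iff)
  then show "(\<Sum>g\<in>basis_idx d X. if g \<in> {ones {}, ones X} then 1/2 else 0 :: real) = 1"
    using sum_uniform_weight[OF finite_basis_idx[OF assms(1)] T, where c = "1/2 :: real"] by simp
qed simp

lemma tensor_over_zero_one_mixture:
  assumes "partition_on L \<pi>" "finite L" "\<forall>i\<in>L. 1 < d i"
  shows "tensor_over d L \<pi> zero_one_mixture
           = diag_op (\<lambda>f. if f \<in> ones ` Union ` Pow \<pi> then (1/2) ^ card \<pi> else 0)"
proof (intro ext)
  fix f g
  show "tensor_over d L \<pi> zero_one_mixture f g
          = diag_op (\<lambda>f. if f \<in> ones ` Union ` Pow \<pi> then (1/2) ^ card \<pi> else 0) f g"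
  proof (cases "f \<in> basis_idx d L \<and> g \<in> basis_idx d L")
    case True
    then have "tensor_over d L \<pi> zero_one_mixture f g = (\<Prod>X\<in>\<pi>.
        if restr f X = restr g X \<and> restr f X \<in> {ones {}, ones X} then 1/2 else 0)"
      by (simp add: tensor_over_def zero_one_mixture_apply)
    also have "\<dots> = (if \<forall>X\<in>\<pi>. restr f X = restr g X \<and> restr f X \<in> {ones {}, ones X}
                      then (1/2) ^ card \<pi> else 0)"
      using finite_elements[OF assms(2,1)] by (rule prod_if_const)
    also have "(\<forall>X\<in>\<pi>. restr f X = restr g X \<and> restr f X \<in> {ones {}, ones X})
                 \<longleftrightarrow> f = g \<and> f \<in> ones ` Union ` Pow \<pi>"
      using restr_eq_on_partition_iff[OF assms(1), where d = d] restr_trivial_iff_ones_Union[OF assms(1,3)] True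
      by (simp add: ball_conj_distrib)
    finally show ?thesis
      by (simp add: diag_op_def)
  next
    case False
    then show ?thesis
      using ones_Union_Pow_subset_basis_idx[OF assms(1,3)]
      by (auto simp: tensor_over_def diag_op_def)
  qed
qed

lemma zero_one_product_in_D_unc:
  assumes "partition_on L \<pi>" "finite L" "\<forall>i\<in>L. 1 < d i"
  shows "tensor_over d L \<pi> zero_one_mixture \<in> D_unc d L \<pi>"
proof -
  have "diag_op (\<lambda>f. if f \<in> ones ` Union ` Pow \<pi> then (1/2) ^ card \<pi> else 0) \<in> density_ops d L"
  proof (rule diag_op_density_ops[OF assms(2)])
    show "f \<in> basis_idx d L" if "(if f \<in> ones ` Union ` Pow \<pi> then (1/2) ^ card \<pi> else 0 :: real) \<noteq> 0" for f
      using that ones_Union_Pow_subset_basis_idx[OF assms(1,3)] by (auto split: if_splits)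
    show "(\<Sum>f\<in>basis_idx d L. if f \<in> ones ` Union ` Pow \<pi> then (1/2) ^ card \<pi> else 0 :: real) = 1"
      using sum_uniform_weight[OF finite_basis_idx[OF assms(2)] ones_Union_Pow_subset_basis_idx[OF assms(1,3)],
              where c = "(1/2) ^ card \<pi> :: real"]
      by (simp add: card_ones_Union_Pow[OF assms(2,1)] power_one_over)
  qed simp
  moreover have "zero_one_mixture X \<in> density_ops d X" if "X \<in> \<pi>" for X
  proof (rule zero_one_mixture_density_ops)
    have "X \<subseteq> L"
      using partition_onD1[OF assms(1)] that by blast
    then show "finite X" and "\<forall>i\<in>X. 1 < d i"
      using assms(2,3) finite_subset by auto
    show "X \<noteq> {}"
      using partition_onD3[OF assms(1)] that by blast
  qed
  ultimately show ?thesis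
    unfolding D_unc_def tensor_over_zero_one_mixture[OF assms, symmetric] by blast
qed

lemma tensor_over_diag_ones_Union_ne_0:
  assumes "partition_on L \<sigma>" "finite L" "\<forall>i\<in>L. 1 < d i" "c \<subseteq> \<sigma>"
    and "tensor_over d L \<sigma> \<tau> (ones {}) (ones {}) \<noteq> 0"
    and "tensor_over d L \<sigma> \<tau> (ones L) (ones L) \<noteq> 0"
  shows "tensor_over d L \<sigma> \<tau> (ones (\<Union>c)) (ones (\<Union>c)) \<noteq> 0"
proof -
  have blocks: "Y \<subseteq> L" if "Y \<in> \<sigma>" for Y
    using partition_onD1[OF assms(1)] that by blast
  have fin: "finite \<sigma>"
    using finite_elements[OF assms(2,1)] .
  have basis: "ones A \<in> basis_idx d L" if "A \<subseteq> L" for A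
    using that assms(3) by (rule ones_in_basis_idx)
  have "\<tau> Y (ones {}) (ones {}) \<noteq> 0" if "Y \<in> \<sigma>" for Y
    using assms(5) that fin basis[of "{}"] by (simp add: tensor_over_def restr_ones)
  moreover have "\<tau> Y (ones Y) (ones Y) \<noteq> 0" if "Y \<in> \<sigma>" for Y
    using assms(6) that fin basis[of L] blocks
    by (simp add: tensor_over_def restr_ones Int_absorb1)
  moreover have "\<Union>c \<subseteq> L"
    using assms(4) blocks by blast
  ultimately show ?thesis
    using fin basis[of "\<Union>c"] Union_Int_block[OF assms(1,4)]
    by (auto simp: tensor_over_def restr_ones Int_commute)
qed

lemma refines_if_zero_one_product_in_D_unc:
  assumes "partition_on L \<pi>" "partition_on L \<sigma>" "finite L" "\<forall>i\<in>L. 1 < d i"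
    and "tensor_over d L \<pi> zero_one_mixture \<in> D_unc d L \<sigma>"
  shows "refines \<pi> \<sigma>"
proof (rule ccontr)
  assume "\<not> refines \<pi> \<sigma>"
  then obtain X where "X \<in> \<pi>" and not_in_block: "\<forall>Y\<in>\<sigma>. \<not> X \<subseteq> Y"
    unfolding refines_def by blast
  have "X \<noteq> {}" "X \<subseteq> L"
    using \<open>X \<in> \<pi>\<close> partition_onD1[OF assms(1)] partition_onD3[OF assms(1)] by auto
  then obtain i where "i \<in> X" "i \<in> L"
    by blast
  then obtain Y where "Y \<in> \<sigma>" "i \<in> Y"
    using partition_onD1[OF assms(2)] by blast
  from assms(5) obtain \<tau> where \<tau>: "tensor_over d L \<pi> zero_one_mixture = tensor_over d L \<sigma> \<tau>"
    unfolding D_unc_def by blast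
  let ?S = "ones ` Union ` Pow \<pi>"
  have diag: "tensor_over d L \<sigma> \<tau> f f \<noteq> 0 \<longleftrightarrow> f \<in> ?S" for f
    unfolding \<tau>[symmetric] tensor_over_zero_one_mixture[OF assms(1,3,4)] by (simp add: diag_op_def)
  have "ones (\<Union>{}) \<in> ?S" "ones (\<Union>\<pi>) \<in> ?S"
    by blast+
  then have "tensor_over d L \<sigma> \<tau> (ones {}) (ones {}) \<noteq> 0" "tensor_over d L \<sigma> \<tau> (ones L) (ones L) \<noteq> 0"
    using partition_onD1[OF assms(1)] diag by simp_all
  then have "tensor_over d L \<sigma> \<tau> (ones (\<Union>{Y})) (ones (\<Union>{Y})) \<noteq> 0"
    using \<open>Y \<in> \<sigma>\<close> by (intro tensor_over_diag_ones_Union_ne_0[OF assms(2,3,4)]) auto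
  then obtain c where "c \<subseteq> \<pi>" "Y = \<Union>c"
    unfolding diag by (auto simp: ones_eq_iff)
  then have "Y \<inter> X = X \<or> Y \<inter> X = {}"
    using Union_Int_block[OF assms(1) _ \<open>X \<in> \<pi>\<close>] by metis
  then show False
    using \<open>i \<in> X\<close> \<open>i \<in> Y\<close> \<open>Y \<in> \<sigma>\<close> not_in_block by blast
qed

lemma finite_chain_up_set_separated:
  fixes P \<Xi> :: "'a set set"
  assumes "finite P" "\<forall>a\<in>P. \<forall>b\<in>P. a \<subseteq> b \<or> b \<subseteq> a" "{} \<notin> P"
    and "\<Xi> \<subseteq> P" "\<Xi> \<noteq> {}" "\<forall>a\<in>\<Xi>. \<forall>b\<in>P. a \<subseteq> b \<longrightarrow> b \<in> \<Xi>"
  shows "\<exists>x. (\<forall>\<xi>\<in>\<Xi>. x \<in> \<xi>) \<and> (\<forall>\<xi>\<in>P - \<Xi>. x \<notin> \<xi>)"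
proof -
  have chain: "subset.chain P \<B>" if "\<B> \<subseteq> P" for \<B>
    using that assms(2) by (auto simp: subset.chain_def)
  have "\<Inter>\<Xi> \<in> \<Xi>"
    using assms(1,4,5) chain by (intro Inter_in_chain) (auto intro: finite_subset)
  have "\<not> \<Inter>\<Xi> \<subseteq> \<Union>(P - \<Xi>)"
  proof (cases "P - \<Xi> = {}")
    case True
    then show ?thesis
      using \<open>\<Inter>\<Xi> \<in> \<Xi>\<close> assms(3,4) by auto
  next
    case False
    then have "\<Union>(P - \<Xi>) \<in> P - \<Xi>"
      using assms(1) chain by (intro Union_in_chain) auto
    then show ?thesis
      using \<open>\<Inter>\<Xi> \<in> \<Xi>\<close> assms(6) by blast
  qed
  then show ?thesis
    by blast
qed

lemma finite_PII:
  assumes "finite L"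
  shows "finite (PII L)"
proof (rule finite_subset)
  show "PII L \<subseteq> Pow (PI L)"
    unfolding PII_def by blast
  show "finite (Pow (PI L))"
    using finitely_many_partition_on[OF assms] by (simp add: PI_def)
qed

lemma mem_C_unc_iff:
  "\<rho> \<in> C_unc d L P2 \<Xi> \<longleftrightarrow>
     (\<forall>\<xi>'\<in>P2 - \<Xi>. \<rho> \<in> density_ops d L \<and> \<rho> \<notin> DS_unc d L \<xi>') \<and> (\<forall>\<xi>\<in>\<Xi>. \<rho> \<in> DS_unc d L \<xi>)"
  unfolding C_unc_def by blast

lemma C_unc_nonempty:
  assumes "finite L" "\<forall>i\<in>L. 1 < d i" "P2 \<subseteq> PII L"
    and "\<forall>a\<in>P2. \<forall>b\<in>P2. a \<subseteq> b \<or> b \<subseteq> a" "\<Xi> \<in> PIII P2"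
  shows "C_unc d L P2 \<Xi> \<noteq> {}"
proof -
  have \<Xi>: "\<Xi> \<subseteq> P2" "\<Xi> \<noteq> {}" "\<forall>a\<in>\<Xi>. \<forall>b\<in>P2. a \<subseteq> b \<longrightarrow> b \<in> \<Xi>"
    using assms(5) unfolding PIII_def by auto
  have "finite P2"
    using assms(3) finite_PII[OF assms(1)] by (rule finite_subset)
  moreover have "{} \<notin> P2"
    using assms(3) unfolding PII_def by blast
  ultimately obtain \<pi> where in_\<Xi>: "\<forall>\<xi>\<in>\<Xi>. \<pi> \<in> \<xi>" and not_in_rest: "\<forall>\<xi>\<in>P2 - \<Xi>. \<pi> \<notin> \<xi>"
    using finite_chain_up_set_separated[OF _ assms(4) _ \<Xi>] by meson
  obtain \<xi> where "\<xi> \<in> \<Xi>"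
    using \<Xi>(2) by blast
  then have "\<pi> \<in> \<xi>" "\<xi> \<in> PII L"
    using in_\<Xi> \<Xi>(1) assms(3) by auto
  then have "\<pi> \<in> PI L"
    unfolding PII_def by blast
  then have \<pi>: "partition_on L \<pi>"
    by (simp add: PI_def)
  define \<rho> where "\<rho> = tensor_over d L \<pi> zero_one_mixture"
  have "\<rho> \<in> D_unc d L \<pi>"
    unfolding \<rho>_def using \<pi> assms(1,2) by (rule zero_one_product_in_D_unc)
  have "\<rho> \<notin> DS_unc d L \<xi>'" if "\<xi>' \<in> P2 - \<Xi>" for \<xi>'
  proof
    assume "\<rho> \<in> DS_unc d L \<xi>'"
    then obtain \<sigma> where "\<sigma> \<in> \<xi>'" "\<rho> \<in> D_unc d L \<sigma>"
      unfolding DS_unc_def by blast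
    have "\<xi>' \<in> PII L"
      using that assms(3) by blast
    then have "\<sigma> \<in> PI L"
      using \<open>\<sigma> \<in> \<xi>'\<close> unfolding PII_def by blast
    then have "refines \<pi> \<sigma>"
      using refines_if_zero_one_product_in_D_unc[OF \<pi> _ assms(1,2)] \<open>\<rho> \<in> D_unc d L \<sigma>\<close>
      unfolding \<rho>_def PI_def by blast
    then have "\<pi> \<in> \<xi>'"
      using \<open>\<xi>' \<in> PII L\<close> \<open>\<sigma> \<in> \<xi>'\<close> \<open>\<pi> \<in> PI L\<close> unfolding PII_def by blast
    then show False
      using not_in_rest that by blast
  qed
  moreover have "\<rho> \<in> DS_unc d L \<xi>" if "\<xi> \<in> \<Xi>" for \<xi>
    using \<open>\<rho> \<in> D_unc d L \<pi>\<close> in_\<Xi> that unfolding DS_unc_def by blast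
  moreover have "\<rho> \<in> density_ops d L"
    using \<open>\<rho> \<in> D_unc d L \<pi>\<close> unfolding D_unc_def by blast
  ultimately have "\<rho> \<in> C_unc d L P2 \<Xi>"
    unfolding mem_C_unc_iff by blast
  then show ?thesis
    by blast
qed

lemma subset_if_C_unc_subset:
  assumes "C_unc d L P2 \<Xi> \<subseteq> C_unc d L P2 \<Upsilon>" "C_unc d L P2 \<Xi> \<noteq> {}" "\<Xi> \<subseteq> P2"
  shows "\<Xi> \<subseteq> \<Upsilon>"
proof
  fix \<xi> assume "\<xi> \<in> \<Xi>"
  obtain \<rho> where "\<rho> \<in> C_unc d L P2 \<Xi>"
    using assms(2) by blast
  then have "\<rho> \<in> DS_unc d L \<xi>" "\<rho> \<in> C_unc d L P2 \<Upsilon>"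
    using \<open>\<xi> \<in> \<Xi>\<close> assms(1) mem_C_unc_iff by blast+
  then show "\<xi> \<in> \<Upsilon>"
    using \<open>\<xi> \<in> \<Xi>\<close> assms(3) unfolding mem_C_unc_iff by blast
qed

theorem proposition6:
  fixes n :: nat and d :: "nat \<Rightarrow> nat"
    and P2 :: "nat set set set set"
    and \<Xi> \<Upsilon> :: "nat set set set set"
  assumes "n \<ge> 1"
    and "\<forall>i\<in>{1..n}. 1 < d i"
    and "P2 \<subseteq> PII {1..n}" and "P2 \<noteq> {}"
    and "\<forall>a\<in>P2. \<forall>b\<in>P2. a \<subseteq> b \<or> b \<subseteq> a"
    and "\<Xi> \<in> PIII P2" and "\<Upsilon> \<in> PIII P2"
  shows "C_unc d {1..n} P2 \<Xi> = C_unc d {1..n} P2 \<Upsilon> \<longleftrightarrow> \<Xi> = \<Upsilon>"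
proof
  assume eq: "C_unc d {1..n} P2 \<Xi> = C_unc d {1..n} P2 \<Upsilon>"
  have "C_unc d {1..n} P2 \<Xi> \<noteq> {}" "C_unc d {1..n} P2 \<Upsilon> \<noteq> {}"
    using C_unc_nonempty[OF _ assms(2,3,5)] assms(6,7) by auto
  moreover have "\<Xi> \<subseteq> P2" "\<Upsilon> \<subseteq> P2"
    using assms(6,7) unfolding PIII_def by auto
  ultimately have "\<Xi> \<subseteq> \<Upsilon>" "\<Upsilon> \<subseteq> \<Xi>"
    using subset_if_C_unc_subset[of d "{1..n}" P2] eq by auto
  then show "\<Xi> = \<Upsilon>"
    by (rule subset_antisym)
qed simp

end
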